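(* Let $L$ be a $2$-locally-differing $k$-dimensional $l$-assignment on a simplicial complex $X$, and let $\sigma_1,\sigma_2\in X(k)$ with $|\sigma_1\cap\sigma_2|=|\sigma_1|-1$. Then there is at most one permutation $\pi$ of $[l]$ such that $L^{\sigma_1}_i(v)=L^{\sigma_2}_{\pi(i)}(v)$ for every $v\in\sigma_1\cap\sigma_2$ and every $i\in[l]$.
   Context: $X(k)$ = faces with $k+1$ elements. A $k$-dimensional $l$-assignment is $L=(L^\sigma_i)_{\sigma\in X(k),i\in[l]}$ with $L^\sigma_i:\sigma\to\{0,1\}$. It is $2$-locally-differing if for every $\sigma\in X(k)$ and $i\ne j$ there exist two distinct vertices $x_1\ne x_2$ of $\sigma$ with $L^\sigma_i(x_t)\neq L^\sigma_j(x_t)$ for $t=1,2$. *)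

theory Defs
  imports "HOL-Combinatorics.Permutations"
begin

definition simplicial_complex :: "'v set set \<Rightarrow> bool" where
  "simplicial_complex X \<longleftrightarrow>
     (\<forall>\<sigma>\<in>X. finite \<sigma> \<and> \<sigma> \<noteq> {} \<and> (\<forall>\<tau>. \<tau> \<subseteq> \<sigma> \<longrightarrow> \<tau> \<noteq> {} \<longrightarrow> \<tau> \<in> X))"

definition faces :: "'v set set \<Rightarrow> nat \<Rightarrow> 'v set set" where
  "faces X k = {\<sigma> \<in> X. card \<sigma> = k + 1}"

text \<open>A k-dimensional l-assignment is L :: face => index => vertex => bool;
L \<sigma> i is L^\<sigma>_i (only its values on \<sigma>, for \<sigma> in X(k) and i in [l] = {1..l}, matter).\<close>
definition two_locally_differing ::
  "'v set set \<Rightarrow> nat \<Rightarrow> nat \<Rightarrow> ('v set \<Rightarrow> nat \<Rightarrow> 'v \<Rightarrow> bool) \<Rightarrow> bool" where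
  "two_locally_differing X k l L \<longleftrightarrow>
     (\<forall>\<sigma>\<in>faces X k. \<forall>i\<in>{1..l}. \<forall>j\<in>{1..l}. i \<noteq> j \<longrightarrow>
        (\<exists>x1 x2. x1 \<in> \<sigma> \<and> x2 \<in> \<sigma> \<and> x1 \<noteq> x2 \<and>
                 L \<sigma> i x1 \<noteq> L \<sigma> j x1 \<and> L \<sigma> i x2 \<noteq> L \<sigma> j x2))"

end

theory Submission
  imports Defs
begin

text \<open>Two faces of equal size sharing all but one vertex differ in exactly one vertex of
  the second face, so two labels of \<open>\<sigma>2\<close> that agree on \<open>\<sigma>1 \<inter> \<sigma>2\<close> differ in at most one
  vertex. Being 2-locally-differing, they must be the same label; hence any two
  permutations matching the labels of \<open>\<sigma>1\<close> with those of \<open>\<sigma>2\<close> send each index to the same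
  label of \<open>\<sigma>2\<close>.\<close>

lemma obtain_Int_eq_Diff_singleton:
  assumes "finite \<tau>" and "card \<sigma> = card \<tau>" and "card (\<sigma> \<inter> \<tau>) = card \<sigma> - 1"
  obtains x where "\<sigma> \<inter> \<tau> = \<tau> - {x}"
proof (cases "\<tau> = {}")
  case True
  then show ?thesis using that by blast
next
  case False
  have "card (\<tau> - \<sigma>) = card \<tau> - card (\<tau> \<inter> \<sigma>)"
    using assms(1) by (simp add: card_Diff_subset_Int)
  also have "\<dots> = 1"
    using assms False by (simp add: Int_commute card_gt_0_iff Suc_leI)
  finally obtain x where "\<tau> - \<sigma> = {x}"
    by (rule card_1_singletonE)
  then have "\<sigma> \<inter> \<tau> = \<tau> - {x}" by blast
  then show ?thesis by (rule that)
qed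

lemma two_locally_differing_eq_if_agree_off_vertex:
  assumes "two_locally_differing X k l L" and "\<sigma> \<in> faces X k"
    and "i \<in> {1..l}" and "j \<in> {1..l}"
    and "\<forall>v\<in>\<sigma> - {x}. L \<sigma> i v = L \<sigma> j v"
  shows "i = j"
proof (rule ccontr)
  assume "i \<noteq> j"
  then obtain x1 x2 where "x1 \<in> \<sigma>" "x2 \<in> \<sigma>" "x1 \<noteq> x2"
    and "L \<sigma> i x1 \<noteq> L \<sigma> j x1" "L \<sigma> i x2 \<noteq> L \<sigma> j x2"
    using assms(1-4) unfolding two_locally_differing_def by blast
  then show False using assms(5) by blast
qed

theorem mainTheorem7:
  fixes X :: "'v set set" and k l :: nat and L :: "'v set \<Rightarrow> nat \<Rightarrow> 'v \<Rightarrow> bool"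
    and \<sigma>1 \<sigma>2 :: "'v set"
  assumes "simplicial_complex X"
    and "two_locally_differing X k l L"
    and "\<sigma>1 \<in> faces X k" and "\<sigma>2 \<in> faces X k"
    and "card (\<sigma>1 \<inter> \<sigma>2) = card \<sigma>1 - 1"
  shows "\<forall>\<pi> \<pi>'.
           (\<pi> permutes {1..l} \<and> (\<forall>v\<in>\<sigma>1 \<inter> \<sigma>2. \<forall>i\<in>{1..l}. L \<sigma>1 i v = L \<sigma>2 (\<pi> i) v)) \<and>
           (\<pi>' permutes {1..l} \<and> (\<forall>v\<in>\<sigma>1 \<inter> \<sigma>2. \<forall>i\<in>{1..l}. L \<sigma>1 i v = L \<sigma>2 (\<pi>' i) v))
           \<longrightarrow> \<pi> = \<pi>'"
proof (intro allI impI)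
  fix \<pi> \<pi>'
  assume "(\<pi> permutes {1..l} \<and> (\<forall>v\<in>\<sigma>1 \<inter> \<sigma>2. \<forall>i\<in>{1..l}. L \<sigma>1 i v = L \<sigma>2 (\<pi> i) v)) \<and>
    (\<pi>' permutes {1..l} \<and> (\<forall>v\<in>\<sigma>1 \<inter> \<sigma>2. \<forall>i\<in>{1..l}. L \<sigma>1 i v = L \<sigma>2 (\<pi>' i) v))"
  then have \<pi>: "\<pi> permutes {1..l}" and \<pi>': "\<pi>' permutes {1..l}"
    and agree: "\<And>v i. v \<in> \<sigma>1 \<inter> \<sigma>2 \<Longrightarrow> i \<in> {1..l} \<Longrightarrow> L \<sigma>2 (\<pi> i) v = L \<sigma>2 (\<pi>' i) v"
    by auto
  have "card \<sigma>1 = k + 1" "card \<sigma>2 = k + 1"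
    using assms(3,4) by (auto simp: faces_def)
  then have "finite \<sigma>2" and "card \<sigma>1 = card \<sigma>2"
    by (simp_all add: card_ge_0_finite)
  then obtain x where x: "\<sigma>1 \<inter> \<sigma>2 = \<sigma>2 - {x}"
    using assms(5) by (rule obtain_Int_eq_Diff_singleton)
  show "\<pi> = \<pi>'"
  proof
    fix i
    show "\<pi> i = \<pi>' i"
    proof (cases "i \<in> {1..l}")
      case True
      have "\<forall>v\<in>\<sigma>2 - {x}. L \<sigma>2 (\<pi> i) v = L \<sigma>2 (\<pi>' i) v"
        using agree True x by blast
      moreover have "\<pi> i \<in> {1..l}" "\<pi>' i \<in> {1..l}"
        using True permutes_in_image[OF \<pi>] permutes_in_image[OF \<pi>'] by auto
      ultimately show ?thesis
        using two_locally_differing_eq_if_agree_off_vertex[OF assms(2,4)] by blast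
    next
      case False
      then show ?thesis using \<pi> \<pi>' by (simp add: permutes_not_in)
    qed
  qed
qed

end
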